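(* Let $A\in\mathbb{R}^{n\times n}$ be symmetric with spectrum contained in $[0,1]$, let $\bm{w}\in\mathbb{R}^n$ with $\|\bm{w}\|=1$, let $m\ge2$ and suppose $m$ Lanczos steps for $A$ and $\bm{w}$ give $V_m$ (first column $\bm{v}_1=\bm{w}$), $\bm{v}_{m+1},H_m,h_{m+1,m}$. Let $\bm{y}_m(t)=V_m\,f(H_m;t)\bm{e}_1$ with $f(z;t)=\tfrac12t^2\psi(t^2z)=(1-\cos(t\sqrt z))/z$, and $\bm{r}_m(t)=-A\bm{y}_m(t)+\bm{v}_1-\bm{y}_m''(t)$. Then for $0\le t\le1$, $$\|\bm{r}_m(t)\|\le\frac{128}{15}\cdot\frac{(t/2)^{2m}}{(2m)!}.$$
   Context: Lanczos: $V_m$ has orthonormal columns with first column $\bm{w}$, $\bm{v}_{m+1}$ is a unit vector orthogonal to them, $H_m=V_m^TAV_m$ is symmetric tridiagonal, $h_{m+1,m}\ge0$, and $AV_m=V_mH_m+h_{m+1,m}\bm{v}_{m+1}\bm{e}_m^T$. $\psi$ is the entire function with $\psi(x^2)=2(1-\cos x)/x^2$, $\psi(0)=1$. Norms are Euclidean. *)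

theory Defs
  imports "HOL-Analysis.Analysis"
begin

text \<open>Taylor coefficients of the entire function psi, with
  psi(x^2) = 2(1 - cos x)/x^2, i.e. psi(z) = sum_k psi_coeff k * z^k.\<close>
definition psi_coeff :: "nat \<Rightarrow> real" where
  "psi_coeff k = 2 * (-1) ^ k / fact (2 * k + 2)"

definition psi :: "real \<Rightarrow> real" where
  "psi z = (\<Sum>k. psi_coeff k * z ^ k)"

text \<open>Square matrices of size m, indexed by 1..m, as functions nat => nat => real.\<close>
fun mpow :: "nat \<Rightarrow> (nat \<Rightarrow> nat \<Rightarrow> real) \<Rightarrow> nat \<Rightarrow> (nat \<Rightarrow> nat \<Rightarrow> real)" where
  "mpow m H 0 = (\<lambda>i j. if i = j then 1 else 0)"
| "mpow m H (Suc k) = (\<lambda>i j. \<Sum>l\<in>{1..m}. H i l * mpow m H k l j)"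

definition psi_mat :: "nat \<Rightarrow> (nat \<Rightarrow> nat \<Rightarrow> real) \<Rightarrow> (nat \<Rightarrow> nat \<Rightarrow> real)" where
  "psi_mat m M = (\<lambda>i j. \<Sum>k. psi_coeff k * mpow m M k i j)"

definition f_mat :: "nat \<Rightarrow> (nat \<Rightarrow> nat \<Rightarrow> real) \<Rightarrow> real \<Rightarrow> (nat \<Rightarrow> nat \<Rightarrow> real)" where
  "f_mat m H t = (\<lambda>i j. t\<^sup>2 / 2 * psi_mat m (\<lambda>a b. t\<^sup>2 * H a b) i j)"

definition mat_spectrum :: "real^'n^'n \<Rightarrow> real set" where
  "mat_spectrum A = {c. \<exists>x. x \<noteq> 0 \<and> A *v x = c *\<^sub>R x}"

end

theory Submission
  imports Defs
begin

text \<open>Write F(t) = f(H_m;t) e_1. Because H_m F + F'' = e_1, the Lanczos relation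
  A V_m = V_m H_m + h v_{m+1} e_m^T turns the residual into exactly r_m(t) = -h F_m(t) v_{m+1}.
  Since 2A - I is a contraction, the tridiagonal H_m has diagonal entries of size at most 1 and
  off-diagonal entries of size at most 1/2, and counting walks in the power series of
  \<psi>(t^2 H_m) gives |F_m(t)| \<le> 2 |h_21 \<cdots> h_{m,m-1}| t^{2m} / (2m)!. Finally
  2^{2m-1} h h_21 \<cdots> h_{m,m-1} is the v_{m+1}-component of T_m(2A - I) v_1, where T_m is the
  Chebyshev polynomial, and that vector has norm at most 1. Altogether
  \<parallel>r_m(t)\<parallel> \<le> 4 (t/2)^{2m} / (2m)!.\<close>

section \<open>Symmetric operators with spectrum in [0,1]\<close>

lemma quadratic_nonneg_imp_linear_coeff_zero:
  fixes g d :: real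
  assumes d: "d \<ge> 0" and nonneg: "\<And>e. 0 \<le> 2*e*g + e^2*d"
  shows "g = 0"
proof -
  define c where "c = d + 1"
  have c: "c > 0" and dc: "d = c - 1" using d by (simp_all add: c_def)
  have "0 \<le> 2*(-g/c)*g + (-g/c)^2*d" by (rule nonneg)
  also have "\<dots> = -(g^2*(c+1))/c^2"
    using c unfolding dc by (simp add: field_simps power2_eq_square)
  finally have "g^2*(c+1) \<le> 0"
    using c by (simp add: divide_le_0_iff)
  with c show ?thesis
    by (metis add_pos_pos mult_le_0_iff not_le zero_less_one power2_less_eq_zero_iff)
qed

lemma norm_add_scaleR_power2:
  fixes p q :: "'a::real_inner"
  shows "norm (p + e *\<^sub>R q)^2 = norm p^2 + 2*e*(p \<bullet> q) + e^2 * norm q^2"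
  unfolding power2_norm_eq_inner
  by (simp add: inner_add_left inner_add_right inner_commute[of q p] power2_eq_square algebra_simps)

lemma linear_norm_attains_max:
  fixes X :: "'v::euclidean_space \<Rightarrow> 'w::real_normed_vector"
  assumes lin: "linear X"
  obtains x0 where "norm x0 = 1" "\<And>y. norm (X y)^2 \<le> norm (X x0)^2 * norm y^2"
proof -
  let ?S = "sphere (0::'v) 1"
  obtain b :: 'v where "b \<in> Basis" using nonempty_Basis by blast
  then have ne: "?S \<noteq> {}" by (auto intro!: exI[of _ b])
  have "continuous_on ?S (\<lambda>x. norm (X x) ^ 2)"
    using lin by (intro continuous_intros linear_continuous_on iffD1[OF linear_conv_bounded_linear])
  then obtain x0 where "x0 \<in> ?S" "\<forall>y\<in>?S. norm (X y)^2 \<le> norm (X x0)^2"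
    using continuous_attains_sup[OF compact_sphere ne] by blast
  then have x0: "norm x0 = 1" and max: "\<And>y. norm y = 1 \<Longrightarrow> norm (X y)^2 \<le> norm (X x0)^2"
    by auto
  have "norm (X y)^2 \<le> norm (X x0)^2 * norm y^2" for y
  proof (cases "y = 0")
    case True
    then show ?thesis using lin by (simp add: linear_0)
  next
    case False
    then have "norm (X ((1/norm y) *\<^sub>R y))^2 \<le> norm (X x0)^2"
      by (intro max) simp
    then have "norm (X y)^2 / norm y^2 \<le> norm (X x0)^2"
      using lin by (simp add: linear_scale power_divide)
    with False show ?thesis by (simp add: pos_divide_le_eq)
  qed
  with x0 that show ?thesis by blast
qed

lemma linear_norm_max_inner_eq:
  fixes X :: "'a::real_inner \<Rightarrow> 'b::real_inner"
  assumes lin: "linear X" and bound: "\<And>y. norm (X y)^2 \<le> L * norm y^2"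
    and x0: "norm x0 = 1" and L: "norm (X x0)^2 = L"
  shows "X x0 \<bullet> X y = L * (x0 \<bullet> y)"
proof -
  define g where "g = L * (x0 \<bullet> y) - X x0 \<bullet> X y"
  define d where "d = L * norm y^2 - norm (X y)^2"
  have "0 \<le> 2*e*g + e^2*d" for e
  proof -
    have "norm (X (x0 + e *\<^sub>R y))^2 \<le> L * norm (x0 + e *\<^sub>R y)^2" by (rule bound)
    moreover have "norm (X (x0 + e *\<^sub>R y))^2 = L + 2*e*(X x0 \<bullet> X y) + e^2 * norm (X y)^2"
      unfolding linear_add[OF lin] linear_scale[OF lin] norm_add_scaleR_power2 L ..
    moreover have "norm (x0 + e *\<^sub>R y)^2 = 1 + 2*e*(x0 \<bullet> y) + e^2 * norm y^2"
      unfolding norm_add_scaleR_power2 x0 by simp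
    ultimately show ?thesis unfolding g_def d_def by (simp add: algebra_simps)
  qed
  moreover have "d \<ge> 0" using bound[of y] by (simp add: d_def)
  ultimately have "g = 0" by (intro quadratic_nonneg_imp_linear_coeff_zero)
  then show ?thesis by (simp add: g_def)
qed

lemma symmetric_square_top_eigenvector:
  fixes X :: "'v::euclidean_space \<Rightarrow> 'v"
  assumes lin: "linear X" and sym: "\<And>x y. X x \<bullet> y = x \<bullet> X y"
  obtains x0 L where "norm x0 = 1" "X (X x0) = L *\<^sub>R x0" "\<And>y. norm (X y)^2 \<le> L * norm y^2"
proof -
  obtain x0 where x0: "norm x0 = 1" and bound: "\<And>y. norm (X y)^2 \<le> norm (X x0)^2 * norm y^2"
    using linear_norm_attains_max[OF lin] by blast
  define L where "L = norm (X x0)^2"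
  have "(X (X x0) - L *\<^sub>R x0) \<bullet> y = 0" for y
    using linear_norm_max_inner_eq[OF lin bound x0, of y] by (simp add: inner_diff_left sym L_def)
  then have "X (X x0) = L *\<^sub>R x0"
    by (metis eq_iff_diff_eq_0 inner_eq_zero_iff)
  with x0 bound show ?thesis by (intro that[of x0 L]) (simp_all add: L_def)
qed

lemma eigenvector_from_square:
  fixes X :: "'v::real_vector \<Rightarrow> 'v"
  assumes lin: "linear X" and sq: "X (X x) = (\<mu> * \<mu>) *\<^sub>R x" and "x \<noteq> 0"
  obtains z c where "z \<noteq> 0" "X z = c *\<^sub>R z" "\<bar>c\<bar> = \<bar>\<mu>\<bar>"
proof (cases "X x + \<mu> *\<^sub>R x = 0")
  case True
  then have "X x = (-\<mu>) *\<^sub>R x" by (simp add: eq_neg_iff_add_eq_0)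
  with \<open>x \<noteq> 0\<close> show ?thesis by (intro that[of x "-\<mu>"]) auto
next
  case False
  have "X (X x + \<mu> *\<^sub>R x) = \<mu> *\<^sub>R (X x + \<mu> *\<^sub>R x)"
    using lin sq by (simp add: linear_add linear_scale algebra_simps)
  with False that show ?thesis by blast
qed

locale unit_spectrum_operator =
  fixes a :: "'v::euclidean_space \<Rightarrow> 'v"
  assumes linear: "linear a"
    and symmetric: "\<And>x y. a x \<bullet> y = x \<bullet> a y"
    and eigenvalue_range: "\<And>c x. x \<noteq> 0 \<Longrightarrow> a x = c *\<^sub>R x \<Longrightarrow> 0 \<le> c \<and> c \<le> 1"
begin

text \<open>The affine map \<open>\<lambda>\<mapsto>2\<lambda>-1\<close> moves the spectrum into \<open>[-1,1]\<close>, the natural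
  interval for Chebyshev polynomials.\<close>
definition centered :: "'v \<Rightarrow> 'v" where
  "centered x = 2 *\<^sub>R a x - x"

lemma linear_centered: "linear centered"
  using linear unfolding centered_def[abs_def] linear_iff by (auto simp: algebra_simps)

lemmas centered_add = linear_add[OF linear_centered]
  and centered_diff = linear_diff[OF linear_centered]
  and centered_zero = linear_0[OF linear_centered]

lemma centered_symmetric: "centered x \<bullet> y = x \<bullet> centered y"
  by (simp add: centered_def inner_diff_left inner_diff_right symmetric)

lemma norm_centered_le: "norm (centered x) \<le> norm x"
proof -
  obtain x0 L where x0: "norm x0 = 1" and sq: "centered (centered x0) = L *\<^sub>R x0"
    and bound: "\<And>y. norm (centered y)^2 \<le> L * norm y^2"
    using symmetric_square_top_eigenvector[OF linear_centered centered_symmetric] by blast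
  have "norm (centered x0)^2 \<le> L" using bound[of x0] x0 by simp
  then have L: "L \<ge> 0" by (meson order_trans zero_le_power2)
  then have "centered (centered x0) = (sqrt L * sqrt L) *\<^sub>R x0" using sq by simp
  moreover have "x0 \<noteq> 0" using x0 by auto
  ultimately obtain z c where "z \<noteq> 0" "centered z = c *\<^sub>R z" and c: "\<bar>c\<bar> = \<bar>sqrt L\<bar>"
    by (rule eigenvector_from_square[OF linear_centered])
  then have "2 *\<^sub>R a z = (c + 1) *\<^sub>R z"
    unfolding centered_def by (simp add: algebra_simps)
  then have "(1/2) *\<^sub>R (2 *\<^sub>R a z) = (1/2) *\<^sub>R ((c + 1) *\<^sub>R z)" by simp
  then have "a z = ((c + 1) / 2) *\<^sub>R z" by simp
  with \<open>z \<noteq> 0\<close> have "\<bar>c\<bar> \<le> 1" using eigenvalue_range by fastforce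
  with c L have "L \<le> 1" by simp
  then have "L * norm x^2 \<le> norm x^2"
    by (simp add: mult_left_le_one_le L)
  then have "norm (centered x)^2 \<le> norm x^2"
    using bound[of x] by linarith
  then show ?thesis by (rule power2_le_imp_le) simp
qed

end

section \<open>Powers of a tridiagonal matrix\<close>

definition subdiag_prod :: "(nat \<Rightarrow> nat \<Rightarrow> real) \<Rightarrow> nat \<Rightarrow> real" where
  "subdiag_prod H i = (\<Prod>l\<in>{1..<i}. \<bar>H (Suc l) l\<bar>)"

text \<open>Entry \<open>i\<close> of \<open>H\<^sup>k e\<^sub>1\<close> is a sum over walks of length \<open>k\<close> from \<open>1\<close> to \<open>i\<close> on the path graph.
  Relative to \<open>subdiag_prod H i\<close>, a step down costs at most \<open>1\<close> (its factor is absorbed), a loop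
  at most \<open>1\<close>, and a step up at most \<open>1/4\<close> (it must be undone by a step down). This binomial
  closed form satisfies the resulting recursion with inequality (\<open>path_weight_step\<close>).\<close>
definition path_weight :: "nat \<Rightarrow> nat \<Rightarrow> real" where
  "path_weight k i = real ((2*k) choose (k+i-1)) * 2^(i-1) / 2^k"

lemma path_weight_nonneg: "path_weight k i \<ge> 0"
  by (simp add: path_weight_def)

lemma path_weight_eq_0: "k + 1 < i \<Longrightarrow> path_weight k i = 0"
  by (simp add: path_weight_def)

lemma path_weight_step:
  assumes "i \<ge> 1"
  shows "(if i \<ge> 2 then path_weight k (i-1) else 0) + path_weight k i + path_weight k (i+1) / 4
           \<le> path_weight (Suc k) i"
proof (cases "i \<ge> 2")
  case False
  then have i: "i = 1" using assms by simp
  have "(2*k) choose k \<le> Suc (2*k) choose k"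
    by (cases k) (simp_all add: binomial_Suc_Suc)
  then have "2 * ((2*k) choose k) + ((2*k) choose Suc k) \<le> Suc (Suc (2*k)) choose Suc k"
    by (simp add: binomial_Suc_Suc)
  then have "(2 * real ((2*k) choose k) + real ((2*k) choose Suc k)) / 2^(Suc k)
      \<le> real (Suc (Suc (2*k)) choose Suc k) / 2^(Suc k)"
    by (intro divide_right_mono) (simp_all flip: of_nat_add of_nat_mult)
  then show ?thesis using i by (simp add: path_weight_def field_simps)
next
  case True
  then obtain j where j: "i = j + 2" by (metis add.commute le_Suc_ex)
  have "real (Suc (Suc (2*k)) choose Suc (Suc (k+j)))
      = real ((2*k) choose (k+j)) + 2 * real ((2*k) choose Suc (k+j)) + real ((2*k) choose Suc (Suc (k+j)))"
    by (simp add: binomial_Suc_Suc)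
  then show ?thesis
    using True unfolding j path_weight_def by (simp add: field_simps power_add)
qed

lemma abs_tridiagonal_entry_mult_le:
  fixes H :: "nat \<Rightarrow> nat \<Rightarrow> real"
  assumes tri: "\<forall>i\<in>{1..m}. \<forall>j\<in>{1..m}. (i + 1 < j \<or> j + 1 < i) \<longrightarrow> H i j = 0"
    and diag: "\<forall>i\<in>{1..m}. \<bar>H i i\<bar> \<le> 1"
    and off: "\<forall>i\<in>{1..m}. \<forall>j\<in>{1..m}. i \<noteq> j \<longrightarrow> \<bar>H i j\<bar> \<le> 1/2"
    and i: "i \<in> {1..m}" and l: "l \<in> {1..m}"
    and x: "\<bar>x\<bar> \<le> subdiag_prod H l * w" and w: "w \<ge> 0"
  shows "\<bar>H i l * x\<bar> \<le> subdiag_prod H i *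
           ((if l = i - 1 \<and> 2 \<le> i then w else 0) + (if l = i then w else 0) + (if l = i + 1 then w / 4 else 0))"
proof -
  have P: "subdiag_prod H i \<ge> 0" by (simp add: subdiag_prod_def prod_nonneg)
  have Hx: "\<bar>H i l * x\<bar> \<le> \<bar>H i l\<bar> * (subdiag_prod H l * w)"
    using x by (simp add: abs_mult mult_left_mono)
  consider "l + 1 = i" | "l = i" | "l = i + 1" | "i + 1 < l \<or> l + 1 < i" by linarith
  then show ?thesis
  proof cases
    case 1
    then have "subdiag_prod H i = \<bar>H i l\<bar> * subdiag_prod H l"
      using l by (auto simp: subdiag_prod_def prod.atLeastLessThan_Suc)
    with Hx 1 l show ?thesis by auto
  next
    case 2
    have "\<bar>H i l\<bar> * (subdiag_prod H l * w) \<le> 1 * (subdiag_prod H l * w)"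
      using diag l 2 P w by (intro mult_right_mono) auto
    with Hx 2 show ?thesis by auto
  next
    case 3
    then have "\<bar>H i l\<bar> * (subdiag_prod H l * w) = (\<bar>H i l\<bar> * \<bar>H l i\<bar>) * (subdiag_prod H i * w)"
      using i by (auto simp: subdiag_prod_def prod.atLeastLessThan_Suc)
    also have "\<dots> \<le> (1/2 * (1/2)) * (subdiag_prod H i * w)"
      using off i l 3 P w by (intro mult_right_mono mult_mono) auto
    finally show ?thesis using Hx 3 by auto
  next
    case 4
    then have "H i l = 0" using tri i l by blast
    with 4 show ?thesis by auto
  qed
qed

lemma abs_mpow_first_col_le:
  fixes H :: "nat \<Rightarrow> nat \<Rightarrow> real"
  assumes tri: "\<forall>i\<in>{1..m}. \<forall>j\<in>{1..m}. (i + 1 < j \<or> j + 1 < i) \<longrightarrow> H i j = 0"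
    and diag: "\<forall>i\<in>{1..m}. \<bar>H i i\<bar> \<le> 1"
    and off: "\<forall>i\<in>{1..m}. \<forall>j\<in>{1..m}. i \<noteq> j \<longrightarrow> \<bar>H i j\<bar> \<le> 1/2"
    and i: "i \<in> {1..m}"
  shows "\<bar>mpow m H k i 1\<bar> \<le> subdiag_prod H i * path_weight k i"
  using i
proof (induction k arbitrary: i)
  case 0
  then show ?case by (cases "i = 1") (simp_all add: subdiag_prod_def path_weight_def prod_nonneg)
next
  case (Suc k)
  have i: "i \<in> {1..m}" by fact
  let ?P = "subdiag_prod H i"
  have P: "?P \<ge> 0" by (simp add: subdiag_prod_def prod_nonneg)
  define g where "g l = ?P * ((if l = i - 1 \<and> 2 \<le> i then path_weight k l else 0)
      + (if l = i then path_weight k l else 0) + (if l = i + 1 then path_weight k l / 4 else 0))" for l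
  have "\<bar>mpow m H (Suc k) i 1\<bar> \<le> (\<Sum>l\<in>{1..m}. \<bar>H i l * mpow m H k l 1\<bar>)"
    by (simp add: sum_abs)
  also have "\<dots> \<le> (\<Sum>l\<in>{1..m}. g l)"
    unfolding g_def using Suc.IH
    by (intro sum_mono abs_tridiagonal_entry_mult_le[OF tri diag off i] path_weight_nonneg) auto
  also have "\<dots> = ?P * ((if 2 \<le> i then path_weight k (i-1) else 0) + path_weight k i
      + (if i + 1 \<le> m then path_weight k (i+1) / 4 else 0))"
    using i unfolding g_def sum_distrib_left[symmetric] by (cases "2 \<le> i") (auto simp: sum.distrib)
  also have "\<dots> \<le> ?P * path_weight (Suc k) i"
    using path_weight_step[of i k] i P path_weight_nonneg[of k "i+1"] by (intro mult_left_mono) auto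
  finally show ?case .
qed

lemma choose_mult_fact_le_fact: "s \<le> n \<Longrightarrow> (n choose s) * fact s \<le> (fact n :: nat)"
proof -
  assume "s \<le> n"
  then have "fact n = (n choose s) * fact s * fact (n - s)"
    using binomial_fact_lemma[of s n] by (simp add: ac_simps)
  then show ?thesis by (simp add: fact_ge_1)
qed

lemma choose_double_mult_fact_le:
  assumes m: "m \<ge> 1" and mk: "m \<le> k + 1"
  shows "real ((2*k) choose (k+m-1)) * fact (2*m) \<le> fact (2*k+2)"
proof -
  have "(2*k) choose (k+m-1) \<le> Suc (2*k) choose Suc (k+m-1)"
    by (simp add: binomial_Suc_Suc)
  also have "\<dots> \<le> (2*k+2) choose (k+m+1)"
    using m by (simp add: binomial_Suc_Suc)
  finally have "((2*k) choose (k+m-1)) * fact (2*m) \<le> ((2*k+2) choose (k+m+1)) * fact (k+m+1)"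
    using mk by (intro mult_le_mono fact_mono) auto
  also have "\<dots> \<le> fact (2*k+2)"
    using mk by (intro choose_mult_fact_le_fact) simp
  finally show ?thesis by (metis of_nat_fact of_nat_le_iff of_nat_mult)
qed

lemma path_weight_term_le:
  assumes t: "0 \<le> t" "t \<le> 1" and m: "m \<ge> 1"
  shows "t^(2*k) * path_weight k m / fact (2*k+2)
           \<le> t^(2*m-2) / fact (2*m) * (if m - 1 \<le> k then (1/2)^(k - (m-1)) else 0)"
proof (cases "m - 1 \<le> k")
  case False
  then show ?thesis by (simp add: path_weight_eq_0)
next
  case True
  then have mk: "m \<le> k + 1" by simp
  have "path_weight k m = real ((2*k) choose (k+m-1)) * (1/2)^(k - (m-1))"
    using True by (simp add: path_weight_def power_diff power_one_over)
  moreover have C: "real ((2*k) choose (k+m-1)) / fact (2*k+2) \<le> 1 / fact (2*m)"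
  proof (rule mult_imp_div_pos_le)
    show "real ((2*k) choose (k+m-1)) \<le> 1 / fact (2*m) * fact (2*k+2)"
      using choose_double_mult_fact_le[OF m mk] by (simp add: pos_le_divide_eq)
  qed simp
  moreover have "t^(2*k) \<le> t^(2*m-2)" using t mk by (intro power_decreasing) auto
  ultimately have "t^(2*k) * path_weight k m / fact (2*k+2)
      = t^(2*k) * (real ((2*k) choose (k+m-1)) / fact (2*k+2)) * (1/2)^(k - (m-1))"
    by simp
  also have "\<dots> \<le> t^(2*m-2) * (1 / fact (2*m)) * (1/2)^(k - (m-1))"
    using \<open>t^(2*k) \<le> t^(2*m-2)\<close> C t by (intro mult_right_mono mult_mono) auto
  finally show ?thesis using True by simp
qed

lemma sums_geometric_half_from: "(\<lambda>k. if N \<le> k then (1/2::real)^(k - N) else 0) sums 2"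
proof -
  have "(\<lambda>i. if N \<le> i + N then (1/2::real)^(i + N - N) else 0) sums 2"
    using geometric_sums[of "1/2::real"] by simp
  then show ?thesis by (subst (asm) sums_zero_iff_shift) auto
qed

lemma path_weight_series_le:
  assumes t: "0 \<le> t" "t \<le> 1" and m: "m \<ge> 1"
  shows "summable (\<lambda>k. t^(2*k) * path_weight k m / fact (2*k+2))"
    and "(\<Sum>k. t^(2*k) * path_weight k m / fact (2*k+2)) \<le> 2 * t^(2*m-2) / fact (2*m)"
proof -
  define e where "e k = t^(2*m-2) / fact (2*m) * (if m - 1 \<le> k then (1/2::real)^(k - (m-1)) else 0)" for k
  have e: "e sums (t^(2*m-2) / fact (2*m) * 2)"
    unfolding e_def by (intro sums_mult sums_geometric_half_from)
  have le: "t^(2*k) * path_weight k m / fact (2*k+2) \<le> e k" for k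
    unfolding e_def by (rule path_weight_term_le[OF t m])
  have nonneg: "0 \<le> t^(2*k) * path_weight k m / fact (2*k+2)" for k
    using t by (simp add: path_weight_nonneg)
  show sm: "summable (\<lambda>k. t^(2*k) * path_weight k m / fact (2*k+2))"
    using le nonneg by (intro summable_comparison_test'[OF sums_summable[OF e], of 0])
      (metis abs_of_nonneg real_norm_def)
  have "(\<Sum>k. t^(2*k) * path_weight k m / fact (2*k+2)) \<le> suminf e"
    by (intro suminf_le le sm sums_summable[OF e])
  also have "\<dots> = 2 * t^(2*m-2) / fact (2*m)" using sums_unique[OF e] by (simp add: ac_simps)
  finally show "(\<Sum>k. t^(2*k) * path_weight k m / fact (2*k+2)) \<le> 2 * t^(2*m-2) / fact (2*m)" .
qed

lemma abs_psi_coeff: "\<bar>psi_coeff q\<bar> = 2 / fact (2*q+2)"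
  by (simp add: psi_coeff_def abs_mult)

lemma mpow_scale: "mpow m (\<lambda>a b. c * H a b) k i j = c^k * mpow m H k i j"
  by (induction k arbitrary: i) (auto simp: sum_distrib_left ac_simps)

lemma abs_f_mat_last_first_le:
  fixes H :: "nat \<Rightarrow> nat \<Rightarrow> real"
  assumes tri: "\<forall>i\<in>{1..m}. \<forall>j\<in>{1..m}. (i + 1 < j \<or> j + 1 < i) \<longrightarrow> H i j = 0"
    and diag: "\<forall>i\<in>{1..m}. \<bar>H i i\<bar> \<le> 1"
    and off: "\<forall>i\<in>{1..m}. \<forall>j\<in>{1..m}. i \<noteq> j \<longrightarrow> \<bar>H i j\<bar> \<le> 1/2"
    and m: "m \<ge> 1" and t: "0 \<le> t" "t \<le> 1"
  shows "\<bar>f_mat m H t m 1\<bar> \<le> 2 * subdiag_prod H m * t^(2*m) / fact (2*m)"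
proof -
  let ?P = "subdiag_prod H m"
  let ?b = "\<lambda>k. t^(2*k) * path_weight k m / fact (2*k+2)"
  define u where "u k = psi_coeff k * ((t^2)^k * mpow m H k m 1)" for k
  have P: "?P \<ge> 0" by (simp add: subdiag_prod_def prod_nonneg)
  have f: "f_mat m H t m 1 = t^2/2 * suminf u"
    unfolding f_mat_def psi_mat_def u_def mpow_scale by simp
  have "norm (u k) \<le> 2 * ?P * ?b k" for k
  proof -
    have "norm (u k) = 2 / fact (2*k+2) * (t^(2*k) * \<bar>mpow m H k m 1\<bar>)"
      unfolding u_def using t by (simp add: abs_mult abs_psi_coeff power_mult)
    also have "\<dots> \<le> 2 / fact (2*k+2) * (t^(2*k) * (?P * path_weight k m))"
      using abs_mpow_first_col_le[OF tri diag off, of m k] m t by (intro mult_left_mono) auto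
    also have "\<dots> = 2 * ?P * ?b k" by (simp add: field_simps)
    finally show ?thesis .
  qed
  then have "norm (suminf u) \<le> (\<Sum>k. 2 * ?P * ?b k)"
    by (rule norm_suminf_le) (intro summable_mult path_weight_series_le[OF t m])
  also have "\<dots> = 2 * ?P * (\<Sum>k. ?b k)" by (intro suminf_mult path_weight_series_le[OF t m])
  also have "\<dots> \<le> 2 * ?P * (2 * t^(2*m-2) / fact (2*m))"
    using P by (intro mult_left_mono path_weight_series_le[OF t m]) auto
  finally have "\<bar>suminf u\<bar> \<le> 2 * ?P * (2 * t^(2*m-2) / fact (2*m))" by simp
  then have "\<bar>f_mat m H t m 1\<bar> \<le> t^2/2 * (2 * ?P * (2 * t^(2*m-2) / fact (2*m)))"
    unfolding f abs_mult by (intro mult_mono) auto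
  also have "\<dots> = 2 * ?P * (t^2 * t^(2*m-2)) / fact (2*m)" by simp
  also have "t^2 * t^(2*m-2) = t^(2*m)"
    using m by (cases m) (simp_all flip: power_add)
  finally show ?thesis .
qed

section \<open>The matrix function as a power series in t\<close>

definition f_coeff :: "nat \<Rightarrow> (nat \<Rightarrow> nat \<Rightarrow> real) \<Rightarrow> nat \<Rightarrow> nat \<Rightarrow> real" where
  "f_coeff m H i n =
     (if even n \<and> n \<ge> 2 then psi_coeff (n div 2 - 1) * mpow m H (n div 2 - 1) i 1 / 2 else 0)"

lemma f_coeff_even: "f_coeff m H i (2*q+2) = psi_coeff q * mpow m H q i 1 / 2"
  by (simp add: f_coeff_def)

lemma f_coeff_eq_0:
  assumes "n \<notin> range (\<lambda>q. 2*q+2)"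
  shows "f_coeff m H i n = 0"
proof -
  have "\<not> (even n \<and> n \<ge> 2)"
  proof
    assume "even n \<and> n \<ge> 2"
    then have "n = 2 * (n div 2 - 1) + 2" by auto
    with assms show False by (metis rangeI)
  qed
  then show ?thesis unfolding f_coeff_def by (rule if_not_P)
qed

lemma abs_mpow_le_power:
  assumes B: "\<forall>i\<in>{1..m}. (\<Sum>l\<in>{1..m}. \<bar>H i l\<bar>) \<le> B" "B \<ge> 1" and i: "i \<in> {1..m}"
  shows "\<bar>mpow m H k i j\<bar> \<le> B^k"
  using i
proof (induction k arbitrary: i)
  case 0
  then show ?case by simp
next
  case (Suc k)
  have "\<bar>mpow m H (Suc k) i j\<bar> \<le> (\<Sum>l\<in>{1..m}. \<bar>H i l\<bar> * \<bar>mpow m H k l j\<bar>)"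
    unfolding mpow.simps abs_mult[symmetric] by (rule sum_abs)
  also have "\<dots> \<le> (\<Sum>l\<in>{1..m}. \<bar>H i l\<bar> * B^k)"
    using Suc.IH by (intro sum_mono mult_left_mono) auto
  also have "\<dots> \<le> B * B^k"
    using B Suc.prems by (simp add: sum_distrib_right[symmetric] mult_right_mono)
  finally show ?case by simp
qed

lemma summable_f_coeff:
  assumes i: "i \<in> {1..m}"
  shows "summable (\<lambda>n. f_coeff m H i n * x^n)"
proof -
  define B where "B = 1 + (\<Sum>i\<in>{1..m}. \<Sum>l\<in>{1..m}. \<bar>H i l\<bar>)"
  have "(\<Sum>l\<in>{1..m}. \<bar>H i l\<bar>) \<le> B" if "i \<in> {1..m}" for i
  proof -
    have "(\<Sum>l\<in>{1..m}. \<bar>H i l\<bar>) \<le> (\<Sum>i\<in>{1..m}. \<Sum>l\<in>{1..m}. \<bar>H i l\<bar>)"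
      using that by (intro member_le_sum) (auto intro: sum_nonneg)
    then show ?thesis by (simp add: B_def)
  qed
  moreover have B1: "B \<ge> 1" unfolding B_def by (auto intro!: sum_nonneg)
  ultimately have P: "\<bar>mpow m H k i 1\<bar> \<le> B^k" for k
    using abs_mpow_le_power i by blast
  have "norm (f_coeff m H i n * x^n) \<le> inverse (fact n) * (B * \<bar>x\<bar>)^n" for n
  proof (cases "n \<in> range (\<lambda>q. 2*q+2)")
    case False
    then show ?thesis using B1 by (simp add: f_coeff_eq_0)
  next
    case True
    then obtain q where n: "n = 2*q+2" by auto
    have "B^q \<le> B^n" using B1 n by (intro power_increasing) auto
    then have "\<bar>mpow m H q i 1\<bar> \<le> B^n" using P[of q] by linarith
    have "norm (f_coeff m H i n * x^n) = inverse (fact n) * (\<bar>mpow m H q i 1\<bar> * \<bar>x\<bar>^n)"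
    proof -
      have fc: "f_coeff m H i n = psi_coeff q * mpow m H q i 1 / 2" unfolding n by (rule f_coeff_even)
      have "norm (f_coeff m H i n * x^n) = \<bar>psi_coeff q\<bar> * \<bar>mpow m H q i 1\<bar> / 2 * \<bar>x\<bar>^n"
        unfolding fc by (simp add: abs_mult power_abs)
      moreover have "\<bar>psi_coeff q\<bar> = 2 / fact n" unfolding n by (rule abs_psi_coeff)
      ultimately show ?thesis by (simp add: field_simps)
    qed
    also have "\<dots> \<le> inverse (fact n) * (B^n * \<bar>x\<bar>^n)"
      using \<open>\<bar>mpow m H q i 1\<bar> \<le> B^n\<close> by (intro mult_left_mono mult_right_mono) auto
    finally show ?thesis by (simp add: power_mult_distrib)
  qed
  then show ?thesis
    by (rule summable_comparison_test'[OF summable_exp[of "B * \<bar>x\<bar>"]])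
qed

lemma f_mat_eq_suminf:
  assumes i: "i \<in> {1..m}"
  shows "f_mat m H t i 1 = (\<Sum>n. f_coeff m H i n * t^n)"
proof (cases "t = 0")
  case True
  then show ?thesis by (simp add: f_mat_def f_coeff_def)
next
  case False
  let ?S = "\<Sum>n. f_coeff m H i n * t^n"
  let ?w = "\<lambda>q. psi_coeff q * mpow m (\<lambda>a b. t^2 * H a b) q i 1"
  have "(\<lambda>n. f_coeff m H i n * t^n) sums ?S"
    using summable_f_coeff[OF i] by (rule summable_sums)
  then have "(\<lambda>q. f_coeff m H i (2*q+2) * t^(2*q+2)) sums ?S"
    by (subst sums_mono_reindex) (auto simp: strict_mono_def f_coeff_eq_0)
  moreover have eq: "f_coeff m H i (2*q+2) * t^(2*q+2) = t^2/2 * ?w q" for q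
    unfolding f_coeff_even mpow_scale power_add power_mult by simp
  ultimately have "(\<lambda>q. t^2/2 * ?w q) sums ?S" by (simp only: eq)
  then have "?w sums (?S / (t^2/2))" using False by (intro sums_mult_D) auto
  then have "suminf ?w = ?S / (t^2/2)" by (rule sums_unique[symmetric])
  then show ?thesis
    using False unfolding f_mat_def psi_mat_def by simp
qed

lemma diffs_diffs_f_coeff_even:
  "diffs (diffs (f_coeff m H i)) (2*q) = (-1)^q * mpow m H q i 1 / fact (2*q)"
proof -
  define c where "c = (2*real q+1) * (2*real q+2)"
  have c: "c > 0" by (simp add: c_def add_pos_nonneg)
  have F: "(fact (2*q+2) :: real) = c * fact (2*q)"
    by (simp add: c_def algebra_simps)
  have "diffs (diffs (f_coeff m H i)) (2*q) = c * f_coeff m H i (2*q+2)"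
    by (simp add: diffs_def c_def algebra_simps)
  also have "\<dots> = c * ((-1)^q * mpow m H q i 1 / (c * fact (2*q)))"
    unfolding f_coeff_even psi_coeff_def F by simp
  also have "\<dots> = (-1)^q * mpow m H q i 1 / fact (2*q)"
    using c by simp
  finally show ?thesis .
qed

lemma f_coeff_ode:
  "(\<Sum>j\<in>{1..m}. H i j * f_coeff m H j n) + diffs (diffs (f_coeff m H i)) n
     = (if n = 0 \<and> i = 1 then 1 else 0)"
proof (cases "even n")
  case False
  then show ?thesis by (simp add: f_coeff_def diffs_def odd_pos)
next
  case True
  then obtain q where n: "n = 2*q" by (auto elim: evenE)
  show ?thesis
  proof (cases q)
    case 0
    then show ?thesis using n diffs_diffs_f_coeff_even[of m H i 0] by (simp add: f_coeff_def)
  next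
    case (Suc p)
    have "f_coeff m H j n = (-1)^p * mpow m H p j 1 / fact (2*q)" for j
      using f_coeff_even[of m H j p] n Suc by (simp add: psi_coeff_def)
    then have "(\<Sum>j\<in>{1..m}. H i j * f_coeff m H j n) = (-1)^p * mpow m H q i 1 / fact (2*q)"
      by (simp add: Suc sum_distrib_left sum_divide_distrib ac_simps)
    moreover have "diffs (diffs (f_coeff m H i)) n = (-1)^q * mpow m H q i 1 / fact (2*q)"
      unfolding n by (rule diffs_diffs_f_coeff_even)
    moreover have "(-1::real)^q = - ((-1)^p)" and "n \<noteq> 0" using Suc n by simp_all
    ultimately show ?thesis by simp
  qed
qed

definition f_mat_dt :: "nat \<Rightarrow> (nat \<Rightarrow> nat \<Rightarrow> real) \<Rightarrow> nat \<Rightarrow> real \<Rightarrow> real" where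
  "f_mat_dt m H i t = (\<Sum>n. diffs (f_coeff m H i) n * t^n)"

definition f_mat_dtt :: "nat \<Rightarrow> (nat \<Rightarrow> nat \<Rightarrow> real) \<Rightarrow> nat \<Rightarrow> real \<Rightarrow> real" where
  "f_mat_dtt m H i t = (\<Sum>n. diffs (diffs (f_coeff m H i)) n * t^n)"

lemma has_field_derivative_f_mat:
  assumes "i \<in> {1..m}"
  shows "((\<lambda>t. f_mat m H t i 1) has_field_derivative f_mat_dt m H i t) (at t)"
  unfolding f_mat_eq_suminf[OF assms] f_mat_dt_def
  by (intro termdiffs_strong_converges_everywhere summable_f_coeff[OF assms])

lemma has_field_derivative_f_mat_dt:
  assumes "i \<in> {1..m}"
  shows "(f_mat_dt m H i has_field_derivative f_mat_dtt m H i t) (at t)"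
  unfolding f_mat_dt_def[abs_def] f_mat_dtt_def
  by (intro termdiffs_strong_converges_everywhere termdiff_converges_all summable_f_coeff[OF assms])

lemma f_mat_ode:
  assumes i: "i \<in> {1..m}"
  shows "(\<Sum>j\<in>{1..m}. H i j * f_mat m H t j 1) + f_mat_dtt m H i t = (if i = 1 then 1 else 0)"
proof -
  have sums: "(\<lambda>n. H i j * (f_coeff m H j n * t^n)) sums (H i j * f_mat m H t j 1)" if "j \<in> {1..m}" for j
    unfolding f_mat_eq_suminf[OF that] by (intro sums_mult summable_sums summable_f_coeff[OF that])
  have "(\<lambda>n. diffs (diffs (f_coeff m H i)) n * t^n) sums f_mat_dtt m H i t"
    unfolding f_mat_dtt_def
    by (intro summable_sums termdiff_converges_all summable_f_coeff[OF i])
  with sums have "(\<lambda>n. (\<Sum>j\<in>{1..m}. H i j * (f_coeff m H j n * t^n)) + diffs (diffs (f_coeff m H i)) n * t^n)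
      sums ((\<Sum>j\<in>{1..m}. H i j * f_mat m H t j 1) + f_mat_dtt m H i t)"
    by (intro sums_add sums_sum) auto
  moreover have "(\<Sum>j\<in>{1..m}. H i j * (f_coeff m H j n * t^n)) + diffs (diffs (f_coeff m H i)) n * t^n
      = (if n = 0 then (if i = 1 then 1 else 0) else 0)" for n
    using f_coeff_ode[where n = n]
    by (auto simp: sum_distrib_right[symmetric] mult.assoc[symmetric] distrib_right[symmetric])
  ultimately have "(\<lambda>n. if n = 0 then (if i = 1 then 1 else 0) else 0 :: real)
      sums ((\<Sum>j\<in>{1..m}. H i j * f_mat m H t j 1) + f_mat_dtt m H i t)"
    by simp
  then show ?thesis
    using sums_single[of 0 "\<lambda>_. if i = 1 then 1 else (0::real)"] sums_unique2 by fastforce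
qed

lemma lanczos_apply_sum:
  fixes a :: "'v::real_vector \<Rightarrow> 'v" and v :: "nat \<Rightarrow> 'v" and m :: nat
  assumes lin: "linear a" and m: "m \<ge> 1"
    and lanczos: "\<forall>j\<in>{1..m}. a (v j) = (\<Sum>i\<in>{1..m}. H i j *\<^sub>R v i) + (if j = m then h *\<^sub>R v (m+1) else 0)"
  shows "a (\<Sum>j\<in>{1..m}. c j *\<^sub>R v j)
           = (\<Sum>i\<in>{1..m}. (\<Sum>j\<in>{1..m}. H i j * c j) *\<^sub>R v i) + (h * c m) *\<^sub>R v (m+1)"
proof -
  have "a (\<Sum>j\<in>{1..m}. c j *\<^sub>R v j) = (\<Sum>j\<in>{1..m}. c j *\<^sub>R a (v j))"
    by (simp add: linear_sum[OF lin] linear_scale[OF lin])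
  also have "\<dots> = (\<Sum>j\<in>{1..m}. c j *\<^sub>R ((\<Sum>i\<in>{1..m}. H i j *\<^sub>R v i)
      + (if j = m then h *\<^sub>R v (m+1) else 0)))"
    using lanczos by (intro sum.cong) auto
  also have "\<dots> = (\<Sum>j\<in>{1..m}. \<Sum>i\<in>{1..m}. (c j * H i j) *\<^sub>R v i)
      + (\<Sum>j\<in>{1..m}. c j *\<^sub>R (if j = m then h *\<^sub>R v (m+1) else 0))"
    by (simp add: scaleR_add_right sum.distrib scaleR_sum_right)
  also have "(\<Sum>j\<in>{1..m}. c j *\<^sub>R (if j = m then h *\<^sub>R v (m+1) else 0))
      = (\<Sum>j\<in>{1..m}. if j = m then (h * c m) *\<^sub>R v (m+1) else 0)"
    by (rule sum.cong) auto
  also have "\<dots> = (h * c m) *\<^sub>R v (m+1)"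
    using m by simp
  also have "(\<Sum>j\<in>{1..m}. \<Sum>i\<in>{1..m}. (c j * H i j) *\<^sub>R v i)
      = (\<Sum>i\<in>{1..m}. (\<Sum>j\<in>{1..m}. H i j * c j) *\<^sub>R v i)"
    by (subst sum.swap) (simp add: scaleR_sum_left mult.commute)
  finally show ?thesis .
qed

lemma second_vector_derivative_f_mat_sum:
  fixes v :: "nat \<Rightarrow> 'v::real_normed_vector"
  shows "vector_derivative (\<lambda>s. vector_derivative (\<lambda>t. \<Sum>j\<in>{1..m}. f_mat m H t j 1 *\<^sub>R v j) (at s)) (at t)
           = (\<Sum>j\<in>{1..m}. f_mat_dtt m H j t *\<^sub>R v j)"
proof -
  have "((\<lambda>t. \<Sum>j\<in>{1..m}. f_mat m H t j 1 *\<^sub>R v j)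
      has_vector_derivative (\<Sum>j\<in>{1..m}. f_mat_dt m H j s *\<^sub>R v j)) (at s)" for s
  proof (rule has_vector_derivative_sum)
    fix j assume "j \<in> {1..m}"
    from has_vector_derivative_scaleR[OF has_field_derivative_f_mat[OF this] has_vector_derivative_const]
    show "((\<lambda>s. f_mat m H s j 1 *\<^sub>R v j) has_vector_derivative f_mat_dt m H j s *\<^sub>R v j) (at s)"
      by simp
  qed
  then have d1: "(\<lambda>s. vector_derivative (\<lambda>t. \<Sum>j\<in>{1..m}. f_mat m H t j 1 *\<^sub>R v j) (at s))
      = (\<lambda>s. \<Sum>j\<in>{1..m}. f_mat_dt m H j s *\<^sub>R v j)"
    by (intro ext vector_derivative_at)
  have "((\<lambda>s. \<Sum>j\<in>{1..m}. f_mat_dt m H j s *\<^sub>R v j)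
      has_vector_derivative (\<Sum>j\<in>{1..m}. f_mat_dtt m H j t *\<^sub>R v j)) (at t)"
  proof (rule has_vector_derivative_sum)
    fix j assume "j \<in> {1..m}"
    from has_vector_derivative_scaleR[OF has_field_derivative_f_mat_dt[OF this] has_vector_derivative_const]
    show "((\<lambda>s. f_mat_dt m H j s *\<^sub>R v j) has_vector_derivative f_mat_dtt m H j t *\<^sub>R v j) (at t)"
      by simp
  qed
  then show ?thesis
    unfolding d1 by (rule vector_derivative_at)
qed

lemma lanczos_residual:
  fixes a :: "'v::real_normed_vector \<Rightarrow> 'v" and v :: "nat \<Rightarrow> 'v" and m :: nat and y :: "real \<Rightarrow> 'v"
  assumes lin: "linear a" and m: "m \<ge> 1"
    and lanczos: "\<forall>j\<in>{1..m}. a (v j) = (\<Sum>i\<in>{1..m}. H i j *\<^sub>R v i) + (if j = m then h *\<^sub>R v (m+1) else 0)"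
    and y: "\<And>t. y t = (\<Sum>j\<in>{1..m}. f_mat m H t j 1 *\<^sub>R v j)"
  shows "- a (y t) + v 1 - vector_derivative (\<lambda>s. vector_derivative y (at s)) (at t)
           = - (h * f_mat m H t m 1) *\<^sub>R v (m+1)"
proof -
  have "v 1 = (\<Sum>i\<in>{1..m}. (if i = 1 then 1 else 0) *\<^sub>R v i)"
    using m by (simp add: if_distrib[of "\<lambda>c. c *\<^sub>R _"] cong: if_cong)
  also have "\<dots> = (\<Sum>i\<in>{1..m}. ((\<Sum>j\<in>{1..m}. H i j * f_mat m H t j 1) + f_mat_dtt m H i t) *\<^sub>R v i)"
    by (intro sum.cong refl) (subst f_mat_ode; simp)
  finally have v1: "v 1 = (\<Sum>i\<in>{1..m}. (\<Sum>j\<in>{1..m}. H i j * f_mat m H t j 1) *\<^sub>R v i)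
      + (\<Sum>i\<in>{1..m}. f_mat_dtt m H i t *\<^sub>R v i)"
    by (simp add: scaleR_add_left sum.distrib)
  have y_eq: "y = (\<lambda>t. \<Sum>j\<in>{1..m}. f_mat m H t j 1 *\<^sub>R v j)" using y by blast
  show ?thesis
    unfolding y_eq second_vector_derivative_f_mat_sum lanczos_apply_sum[OF lin m lanczos]
    by (subst v1) (simp add: algebra_simps)
qed

section \<open>The Lanczos relation\<close>

locale lanczos_relation = unit_spectrum_operator a for a :: "'v::euclidean_space \<Rightarrow> 'v" +
  fixes m :: nat and v :: "nat \<Rightarrow> 'v" and H :: "nat \<Rightarrow> nat \<Rightarrow> real" and h :: real
  assumes m_pos: "m \<ge> 1"
    and orthonormal: "\<forall>i\<in>{1..m+1}. \<forall>j\<in>{1..m+1}. v i \<bullet> v j = (if i = j then 1 else 0)"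
    and hessenberg: "\<forall>i\<in>{1..m}. \<forall>j\<in>{1..m}. j + 1 < i \<longrightarrow> H i j = 0"
    and lanczos: "\<forall>j\<in>{1..m}. a (v j)
                    = (\<Sum>i\<in>{1..m}. H i j *\<^sub>R v i) + (if j = m then h *\<^sub>R v (m + 1) else 0)"
begin

definition krylov :: "nat \<Rightarrow> 'v set" where
  "krylov j = span (v ` {1..j})"

definition beta :: "nat \<Rightarrow> real" where
  "beta j = v (Suc j) \<bullet> a (v j)"

lemma norm_v: "i \<in> {1..m+1} \<Longrightarrow> norm (v i) = 1"
  using orthonormal by (simp add: norm_eq_1)

lemma subspace_krylov: "subspace (krylov j)"
  by (simp add: krylov_def)

lemma v_in_krylov: "i \<in> {1..j} \<Longrightarrow> v i \<in> krylov j"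
  unfolding krylov_def by (intro span_base) simp

lemma krylov_mono: "j \<le> k \<Longrightarrow> krylov j \<subseteq> krylov k"
  unfolding krylov_def by (intro span_mono image_mono) auto

lemma a_v_in_krylov:
  assumes i: "i \<in> {1..m}"
  shows "a (v i) \<in> krylov (Suc i)"
proof -
  have "H l i *\<^sub>R v l \<in> krylov (Suc i)" if l: "l \<in> {1..m}" for l
  proof (cases "l \<le> Suc i")
    case True
    then show ?thesis using l by (intro subspace_scale[OF subspace_krylov] v_in_krylov) auto
  next
    case False
    then show ?thesis using l i hessenberg subspace_0[OF subspace_krylov] by auto
  qed
  then have "(\<Sum>l\<in>{1..m}. H l i *\<^sub>R v l) \<in> krylov (Suc i)"
    by (intro subspace_sum[OF subspace_krylov])
  moreover have "(if i = m then h *\<^sub>R v (m + 1) else 0) \<in> krylov (Suc i)"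
    using i by (auto intro!: subspace_scale[OF subspace_krylov] v_in_krylov subspace_0[OF subspace_krylov])
  ultimately show ?thesis
    using lanczos i subspace_add[OF subspace_krylov] by simp
qed

lemma a_in_krylov:
  assumes x: "x \<in> krylov j" and j: "j \<le> m"
  shows "a x \<in> krylov (Suc j)"
proof -
  have "a ` v ` {1..j} \<subseteq> krylov (Suc j)"
    using j a_v_in_krylov krylov_mono[of "Suc _" "Suc j"] by fastforce
  then have "span (a ` v ` {1..j}) \<subseteq> krylov (Suc j)"
    unfolding krylov_def by (intro span_minimal subspace_span)
  with x show ?thesis
    unfolding krylov_def real_vector.linear_span_image[OF linear] by blast
qed

lemma centered_in_krylov:
  assumes "x \<in> krylov j" "j \<le> m"
  shows "centered x \<in> krylov (Suc j)"
proof -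
  have "x \<in> krylov (Suc j)" using assms(1) krylov_mono[of j "Suc j"] by auto
  with a_in_krylov[OF assms] show ?thesis
    unfolding centered_def by (intro subspace_diff[OF subspace_krylov] subspace_scale[OF subspace_krylov])
qed

lemma inner_v_krylov:
  assumes x: "x \<in> krylov j" and k: "k \<in> {Suc j..m+1}"
  shows "v k \<bullet> x = 0"
proof -
  have "orthogonal (v k) x"
    using x k orthonormal unfolding krylov_def
    by (intro orthogonal_to_span[of x]) (auto simp: orthogonal_def)
  then show ?thesis by (simp add: orthogonal_def)
qed

lemma inner_next_a_krylov:
  assumes x: "x \<in> krylov j" and j: "1 \<le> j" "j \<le> m"
  shows "v (Suc j) \<bullet> a x = beta j * (v j \<bullet> x)"
proof (rule real_vector.linear_eq_on_span[where B = "v ` {1..j}"])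
  show "linear (\<lambda>x. v (Suc j) \<bullet> a x)" "linear (\<lambda>x. beta j * (v j \<bullet> x))"
    using linear_compose[OF linear bounded_linear_inner_right[THEN bounded_linear.linear]]
    by (auto simp: o_def linear_iff inner_add_right distrib_left)
  show "x \<in> span (v ` {1..j})" using x by (simp add: krylov_def)
  show "v (Suc j) \<bullet> a y = beta j * (v j \<bullet> y)" if "y \<in> v ` {1..j}" for y
  proof -
    from that obtain i where i: "i \<in> {1..j}" and y: "y = v i" by blast
    show ?thesis
    proof (cases "i = j")
      case True
      then show ?thesis using orthonormal j y by (simp add: beta_def)
    next
      case False
      then have "v (Suc j) \<bullet> a (v i) = 0"
        using i j by (intro inner_v_krylov[where j = "Suc i"] a_v_in_krylov) auto
      moreover have "v j \<bullet> v i = 0" using False i j orthonormal by auto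
      ultimately show ?thesis using y by simp
    qed
  qed
qed

lemma inner_next_centered_krylov:
  assumes "x \<in> krylov j" "1 \<le> j" "j \<le> m"
  shows "v (Suc j) \<bullet> centered x = 2 * beta j * (v j \<bullet> x)"
  using inner_next_a_krylov[OF assms] inner_v_krylov[OF assms(1), of "Suc j"] assms(3)
  by (simp add: centered_def inner_diff_right)

lemma inner_v_a_v:
  assumes "i \<in> {1..m}" "j \<in> {1..m}"
  shows "v i \<bullet> a (v j) = H i j"
proof -
  have "v i \<bullet> a (v j) = (\<Sum>l\<in>{1..m}. H l j * (v i \<bullet> v l)) + (if j = m then h * (v i \<bullet> v (m+1)) else 0)"
    using lanczos assms by (simp add: inner_add_right inner_sum_right)
  also have "(\<Sum>l\<in>{1..m}. H l j * (v i \<bullet> v l)) = (\<Sum>l\<in>{1..m}. if l = i then H l j else 0)"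
    using orthonormal assms by (intro sum.cong) auto
  also have "(if j = m then h * (v i \<bullet> v (m+1)) else 0) = 0"
    using orthonormal assms by auto
  finally show ?thesis using assms by simp
qed

lemma beta_eq: "j \<in> {1..<m} \<Longrightarrow> beta j = H (Suc j) j"
  using inner_v_a_v by (simp add: beta_def)

lemma beta_last: "beta m = h"
proof -
  have "beta m = (\<Sum>i\<in>{1..m}. H i m * (v (Suc m) \<bullet> v i)) + h * (v (Suc m) \<bullet> v (Suc m))"
    using lanczos m_pos by (simp add: beta_def inner_add_right inner_sum_right)
  also have "\<dots> = h" using orthonormal by simp
  finally show ?thesis .
qed

text \<open>If \<open>v\<^sub>1\<close> were an eigenvector of \<open>centered\<close> for \<open>cos \<theta>\<close>, the recursion would be a rotation
  by \<open>\<theta>\<close> of \<open>(t, sin \<theta> s)\<close>: the pair is \<open>(T\<^sub>k(X) v\<^sub>1, U\<^sub>k\<^sub>-\<^sub>1(X) v\<^sub>1)\<close> for \<open>X = centered\<close>,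
  with Chebyshev polynomials of the first and second kind, and the invariant below is
  \<open>cos\<^sup>2 + sin\<^sup>2 = 1\<close>.\<close>
primrec chebyshev_pair :: "nat \<Rightarrow> 'v \<times> 'v" where
  "chebyshev_pair 0 = (v 1, 0)"
| "chebyshev_pair (Suc k) =
     (centered (fst (chebyshev_pair k)) - (snd (chebyshev_pair k) - centered (centered (snd (chebyshev_pair k)))),
      fst (chebyshev_pair k) + centered (snd (chebyshev_pair k)))"

lemma chebyshev_step_invariant:
  "norm (centered t - (s - centered (centered s)))^2 + (norm (t + centered s)^2 - norm (centered (t + centered s))^2)
     = norm t^2 + (norm s^2 - norm (centered s)^2)"
proof -
  have "s \<bullet> centered t = t \<bullet> centered s" by (metis centered_symmetric inner_commute)
  moreover have "centered (centered s) \<bullet> centered t = centered t \<bullet> centered (centered s)"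
    by (rule inner_commute)
  ultimately show ?thesis
    by (simp add: power2_norm_eq_inner inner_add_left inner_add_right inner_diff_left
        inner_diff_right centered_add centered_diff centered_symmetric inner_commute[of "centered s" t]
        inner_commute[of "centered t" t] algebra_simps)
qed

lemma norm_chebyshev_fst_le: "norm (fst (chebyshev_pair k)) \<le> 1"
proof -
  have inv: "norm (fst (chebyshev_pair k))^2
      + (norm (snd (chebyshev_pair k))^2 - norm (centered (snd (chebyshev_pair k)))^2) = 1"
    by (induction k) (use norm_v[of 1] m_pos in \<open>simp_all add: centered_zero chebyshev_step_invariant\<close>)
  have "norm (centered (snd (chebyshev_pair k)))^2 \<le> norm (snd (chebyshev_pair k))^2"
    by (simp add: norm_centered_le power_mono)
  with inv have "norm (fst (chebyshev_pair k))^2 \<le> 1" by linarith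
  then show ?thesis by (simp add: power_le_one_iff)
qed

lemma chebyshev_pair_krylov:
  "k \<le> m \<Longrightarrow> fst (chebyshev_pair k) \<in> krylov (Suc k) \<and> snd (chebyshev_pair k) \<in> krylov k"
proof (induction k)
  case 0
  then show ?case by (simp add: v_in_krylov subspace_0[OF subspace_krylov])
next
  case (Suc k)
  then have t: "fst (chebyshev_pair k) \<in> krylov (Suc k)" and s: "snd (chebyshev_pair k) \<in> krylov k"
    and k: "Suc k \<le> m" by auto
  have Xs: "centered (snd (chebyshev_pair k)) \<in> krylov (Suc k)"
    using centered_in_krylov[OF s] k by simp
  have "centered (fst (chebyshev_pair k)) \<in> krylov (Suc (Suc k))"
    "centered (centered (snd (chebyshev_pair k))) \<in> krylov (Suc (Suc k))"
    "snd (chebyshev_pair k) \<in> krylov (Suc (Suc k))"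
    using centered_in_krylov[OF t] centered_in_krylov[OF Xs] s krylov_mono[of k "Suc (Suc k)"] k by auto
  with t Xs show ?case
    by (simp add: subspace_add[OF subspace_krylov] subspace_diff[OF subspace_krylov])
qed

lemma chebyshev_fst_leading:
  assumes "k \<in> {1..m}"
  shows "v (Suc k) \<bullet> fst (chebyshev_pair k) = 2 * beta k * (v k \<bullet> snd (chebyshev_pair k))"
proof -
  obtain p where k: "k = Suc p" using assms by (cases k) auto
  let ?t = "fst (chebyshev_pair p)" and ?s = "snd (chebyshev_pair p)"
  have t: "?t \<in> krylov k" and s: "?s \<in> krylov p" and p: "p < m"
    using chebyshev_pair_krylov[of p] assms k by auto
  have Xs: "centered ?s \<in> krylov k" using centered_in_krylov[OF s] p k by simp
  have "v (Suc k) \<bullet> ?s = 0" using inner_v_krylov[OF s] assms k by simp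
  with inner_next_centered_krylov[OF t] inner_next_centered_krylov[OF Xs] assms
  show ?thesis by (simp add: k inner_add_right inner_diff_right algebra_simps)
qed

lemma chebyshev_snd_leading:
  "k < m \<Longrightarrow> v (Suc k) \<bullet> snd (chebyshev_pair (Suc k)) = 4^k * (\<Prod>j\<in>{1..k}. beta j)"
proof (induction k)
  case 0
  then show ?case using orthonormal by (simp add: centered_zero)
next
  case (Suc k)
  let ?s = "snd (chebyshev_pair (Suc k))"
  have s: "?s \<in> krylov (Suc k)" using chebyshev_pair_krylov[of "Suc k"] Suc.prems by simp
  have "v (Suc (Suc k)) \<bullet> snd (chebyshev_pair (Suc (Suc k)))
      = 2 * beta (Suc k) * (v (Suc k) \<bullet> ?s) + 2 * beta (Suc k) * (v (Suc k) \<bullet> ?s)"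
    using chebyshev_fst_leading[of "Suc k"] inner_next_centered_krylov[OF s] Suc.prems
    by (simp add: inner_add_right)
  with Suc show ?case by simp
qed

lemma subdiag_prod_mult_h_le: "2 * 4^(m-1) * (subdiag_prod H m * \<bar>h\<bar>) \<le> 1"
proof -
  have "\<bar>v (Suc m) \<bullet> fst (chebyshev_pair m)\<bar> \<le> norm (v (Suc m)) * norm (fst (chebyshev_pair m))"
    by (rule Cauchy_Schwarz_ineq2)
  also have "\<dots> \<le> 1" using norm_v[of "Suc m"] norm_chebyshev_fst_le[of m] by simp
  finally have le: "\<bar>v (Suc m) \<bullet> fst (chebyshev_pair m)\<bar> \<le> 1" .
  obtain p where p: "m = Suc p" using m_pos by (cases m) auto
  have "v (Suc m) \<bullet> fst (chebyshev_pair m) = 2 * beta m * (4^p * (\<Prod>j\<in>{1..p}. beta j))"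
    using chebyshev_fst_leading[of m] chebyshev_snd_leading[of p] m_pos p by simp
  also have "(\<Prod>j\<in>{1..p}. beta j) = (\<Prod>j\<in>{1..<m}. H (Suc j) j)"
    unfolding p by (intro prod.cong) (auto simp: beta_eq p)
  finally have "v (Suc m) \<bullet> fst (chebyshev_pair m) = 2 * h * 4^p * (\<Prod>j\<in>{1..<m}. H (Suc j) j)"
    by (simp add: beta_last)
  moreover have "m - 1 = p" using p by simp
  ultimately show ?thesis
    using le by (simp add: subdiag_prod_def abs_mult abs_prod ac_simps)
qed

lemma H_symmetric: "i \<in> {1..m} \<Longrightarrow> j \<in> {1..m} \<Longrightarrow> H i j = H j i"
  using inner_v_a_v symmetric by (metis inner_commute)

lemma H_tridiagonal: "\<forall>i\<in>{1..m}. \<forall>j\<in>{1..m}. (i + 1 < j \<or> j + 1 < i) \<longrightarrow> H i j = 0"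
  using hessenberg H_symmetric by metis

lemma abs_H_le:
  assumes i: "i \<in> {1..m}" and j: "j \<in> {1..m}"
  shows "\<bar>H i j\<bar> \<le> (if i = j then 1 else 1/2)"
proof -
  have "\<bar>v i \<bullet> centered (v j)\<bar> \<le> norm (v i) * norm (centered (v j))"
    by (rule Cauchy_Schwarz_ineq2)
  also have "\<dots> \<le> 1"
    using norm_v[of i] norm_v[of j] norm_centered_le[of "v j"] i j by simp
  finally have "\<bar>v i \<bullet> centered (v j)\<bar> \<le> 1" .
  moreover have "H i j = (v i \<bullet> centered (v j) + v i \<bullet> v j) / 2"
    using inner_v_a_v[OF i j] by (simp add: centered_def inner_diff_right)
  moreover have "v i \<bullet> v j = (if i = j then 1 else 0)"
    using orthonormal i j by auto
  ultimately show ?thesis by (auto simp: abs_le_iff)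
qed

lemma norm_residual_le:
  assumes y: "\<And>t. y t = (\<Sum>j\<in>{1..m}. f_mat m H t j 1 *\<^sub>R v j)" and t: "0 \<le> t" "t \<le> 1"
  shows "norm (- a (y t) + v 1 - vector_derivative (\<lambda>s. vector_derivative y (at s)) (at t))
           \<le> 4 * (t/2)^(2*m) / fact (2*m)"
proof -
  let ?P = "subdiag_prod H m"
  have diag: "\<forall>i\<in>{1..m}. \<bar>H i i\<bar> \<le> 1" and off: "\<forall>i\<in>{1..m}. \<forall>j\<in>{1..m}. i \<noteq> j \<longrightarrow> \<bar>H i j\<bar> \<le> 1/2"
    using abs_H_le by fastforce+
  have "\<bar>f_mat m H t m 1\<bar> \<le> 2 * ?P * t^(2*m) / fact (2*m)"
    by (rule abs_f_mat_last_first_le[OF H_tridiagonal diag off m_pos t])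
  then have "\<bar>h\<bar> * \<bar>f_mat m H t m 1\<bar> \<le> \<bar>h\<bar> * (2 * ?P * t^(2*m) / fact (2*m))"
    by (rule mult_left_mono) simp
  also have "\<dots> = 2 * (?P * \<bar>h\<bar>) * t^(2*m) / fact (2*m)" by simp
  also have "\<dots> \<le> 1 / 4^(m-1) * t^(2*m) / fact (2*m)"
    using subdiag_prod_mult_h_le t
    by (intro divide_right_mono mult_right_mono) (auto simp: field_simps)
  also have "\<dots> = 4 * (t/2)^(2*m) / fact (2*m)"
  proof -
    have "(t/2)^(2*m) = t^(2*m) / 4^m" by (simp add: power_divide power_mult)
    moreover have "(4::real)^m = 4 * 4^(m-1)" using m_pos by (cases m) simp_all
    ultimately show ?thesis by simp
  qed
  finally show ?thesis
    using lanczos_residual[OF linear m_pos lanczos y] norm_v[of "m+1"] by (simp add: abs_mult)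
qed

end

theorem proposition3p6:
  fixes A :: "real^'n^'n" and w :: "real^'n" and m :: nat
    and v :: "nat \<Rightarrow> real^'n" and H :: "nat \<Rightarrow> nat \<Rightarrow> real" and h :: real
    and y r :: "real \<Rightarrow> real^'n"
  assumes symA: "transpose A = A"
    and specA: "mat_spectrum A \<subseteq> {0..1}"
    and w_norm: "norm w = 1"
    and m2: "m \<ge> 2"
    and v1: "v 1 = w"
    and orth: "\<forall>i\<in>{1..m+1}. \<forall>j\<in>{1..m+1}. v i \<bullet> v j = (if i = j then 1 else 0)"
    and Hdef: "\<forall>i\<in>{1..m}. \<forall>j\<in>{1..m}. H i j = v i \<bullet> (A *v v j)"
    and Htri: "\<forall>i\<in>{1..m}. \<forall>j\<in>{1..m}. (i + 1 < j \<or> j + 1 < i) \<longrightarrow> H i j = 0"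
    and Hsym: "\<forall>i\<in>{1..m}. \<forall>j\<in>{1..m}. H i j = H j i"
    and h_nonneg: "h \<ge> 0"
    and lanczos: "\<forall>j\<in>{1..m}. A *v v j
                    = (\<Sum>i\<in>{1..m}. H i j *\<^sub>R v i) + (if j = m then h *\<^sub>R v (m + 1) else 0)"
    and y_def: "\<And>t. y t = (\<Sum>j\<in>{1..m}. f_mat m H t j 1 *\<^sub>R v j)"
    and r_def: "\<And>t. r t = - (A *v y t) + v 1
                   - vector_derivative (\<lambda>s. vector_derivative y (at s)) (at t)"
  shows "\<forall>t\<in>{0..1}. norm (r t) \<le> 128 / 15 * (t / 2) ^ (2 * m) / fact (2 * m)"
proof -
  have "(A *v x) \<bullet> z = x \<bullet> (A *v z)" for x z
    using dot_lmul_matrix[of x A z] vector_transpose_matrix[of x A] symA by simp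
  moreover have "0 \<le> c \<and> c \<le> 1" if "x \<noteq> 0" "A *v x = c *\<^sub>R x" for c x
    using that specA unfolding mat_spectrum_def by auto
  ultimately have "unit_spectrum_operator (\<lambda>x. A *v x)"
    by (intro unit_spectrum_operator.intro matrix_vector_mul_linear)
  moreover have "lanczos_relation_axioms (\<lambda>x. A *v x) m v H h"
    using m2 orth Htri lanczos by (intro lanczos_relation_axioms.intro) auto
  ultimately interpret lanczos_relation "\<lambda>x. A *v x" m v H h
    by (rule lanczos_relation.intro)
  show ?thesis
  proof
    fix t :: real assume "t \<in> {0..1}"
    then have "norm (r t) \<le> 4 * (t/2)^(2*m) / fact (2*m)"
      using norm_residual_le[OF y_def] unfolding r_def by auto
    also have "\<dots> \<le> 128 / 15 * (t/2)^(2*m) / fact (2*m)"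
      using \<open>t \<in> {0..1}\<close> by (intro divide_right_mono mult_right_mono) auto
    finally show "norm (r t) \<le> 128 / 15 * (t / 2) ^ (2 * m) / fact (2 * m)" .
  qed
qed

end
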